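(* Let $b\ge0$ be an integer, $W\in\mathrm U(n)$ with columns $|w_1\rangle,\dots,|w_n\rangle$, and let $\sigma^{(2)}$ be the fourth-order moment matrix of $\mathcal U_W|b^n\rangle$. Then $$\sigma^{(2)}=(b+1)^2\big(I\otimes I+\mathrm{SWAP}\big)-b(b+1)\sum_{i=1}^n\big(|w_i\rangle\otimes|w_i\rangle\big)\big(\langle w_i|\otimes\langle w_i|\big),$$ where $\mathrm{SWAP}$ is the operator on $\mathbb C^n\otimes\mathbb C^n$ with $\mathrm{SWAP}(|u\rangle\otimes|v\rangle)=|v\rangle\otimes|u\rangle$. Consequently, for $b\ge1$, $A:=\frac{1}{b(b+1)}\big((b+1)^2(I\otimes I+\mathrm{SWAP})-\sigma^{(2)}\big)$ is the orthogonal projector $\sum_i (|w_i\rangle\otimes|w_i\rangle)(\langle w_i|\otimes\langle w_i|)$ of rank $n$.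
   Context: Consider $n$ bosonic modes with annihilation operators $a_1,\dots,a_n$ on the Fock space, $[a_i,a_j^\dagger]=\delta_{ij}$, $[a_i,a_j]=0$. $|b^n\rangle=|b,\dots,b\rangle$ is the Fock state with $b$ bosons in each mode. For $W\in\mathrm U(n)$, $\mathcal U_W$ denotes the passive Gaussian unitary with $\mathcal U_W|0\rangle=|0\rangle$ and $\mathcal U_W^\dagger a_i\mathcal U_W=\sum_j W_{ij}a_j$. For a state $|\psi\rangle$, $\sigma^{(2)}$ is the $n^2\times n^2$ matrix with rows indexed by $(i,j)$ and columns by $(k,l)$, $\sigma^{(2)}_{ij;kl}=\langle\psi|a_ia_ja_k^\dagger a_l^\dagger|\psi\rangle$, viewed as an operator on $\mathbb C^n\otimes\mathbb C^n$ with standard basis $|i\rangle\otimes|j\rangle$. *)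

theory Defs
  imports "HOL-Analysis.Analysis" "Jordan_Normal_Form.DL_Rank" "Jordan_Normal_Form.Schur_Decomposition"
begin

text \<open>A state is given by its
  coefficients in the Fock (occupation number) basis: a function from occupation vectors
  (nat \<Rightarrow> nat, zero outside the modes) to complex amplitudes.  We work on the dense
  subspace of finitely supported states, on which all operators below are defined.\<close>

type_synonym occ = "nat \<Rightarrow> nat"
type_synonym fstate = "occ \<Rightarrow> complex"

definition valid_occ :: "nat \<Rightarrow> occ \<Rightarrow> bool" where
  "valid_occ n m \<longleftrightarrow> (\<forall>k\<ge>n. m k = 0)"

definition fock_state :: "nat \<Rightarrow> fstate \<Rightarrow> bool" where
  "fock_state n \<psi> \<longleftrightarrow> finite {m. \<psi> m \<noteq> 0} \<and> (\<forall>m. \<psi> m \<noteq> 0 \<longrightarrow> valid_occ n m)"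

definition finner :: "fstate \<Rightarrow> fstate \<Rightarrow> complex" where
  "finner \<phi> \<psi> = (\<Sum>m\<in>{m. \<phi> m \<noteq> 0}. cnj (\<phi> m) * \<psi> m)"

text \<open>Annihilation: a_i|..,k,..> = sqrt k |..,k-1,..>; creation: a_i^dag|..,k,..> = sqrt(k+1)|..,k+1,..>.\<close>
definition annih :: "nat \<Rightarrow> fstate \<Rightarrow> fstate" where
  "annih i \<psi> = (\<lambda>m. complex_of_real (sqrt (real (m i + 1))) * \<psi> (m(i := m i + 1)))"

definition creat :: "nat \<Rightarrow> fstate \<Rightarrow> fstate" where
  "creat i \<psi> = (\<lambda>m. if m i = 0 then 0
                     else complex_of_real (sqrt (real (m i))) * \<psi> (m(i := m i - 1)))"

definition fock_basis :: "occ \<Rightarrow> fstate" where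
  "fock_basis m = (\<lambda>m'. if m' = m then 1 else 0)"

definition vacuum :: fstate where
  "vacuum = fock_basis (\<lambda>_. 0)"

definition uniform_fock :: "nat \<Rightarrow> nat \<Rightarrow> fstate" where
  "uniform_fock n b = fock_basis (\<lambda>k. if k < n then b else 0)"

definition passive_gaussian_unitary :: "nat \<Rightarrow> complex mat \<Rightarrow> (fstate \<Rightarrow> fstate) \<Rightarrow> bool" where
  "passive_gaussian_unitary n W U \<longleftrightarrow>
     (\<forall>\<psi>. fock_state n \<psi> \<longrightarrow> fock_state n (U \<psi>)) \<and>
     (\<exists>U'. (\<forall>\<psi>. fock_state n \<psi> \<longrightarrow> fock_state n (U' \<psi>)) \<and>
           (\<forall>\<phi> \<psi>. fock_state n \<phi> \<longrightarrow> fock_state n \<psi> \<longrightarrow> finner (U \<phi>) \<psi> = finner \<phi> (U' \<psi>)) \<and>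
           (\<forall>\<psi>. fock_state n \<psi> \<longrightarrow> U' (U \<psi>) = \<psi> \<and> U (U' \<psi>) = \<psi>) \<and>
           (\<forall>i<n. \<forall>\<psi>. fock_state n \<psi> \<longrightarrow>
               U' (annih i (U \<psi>)) = (\<lambda>m. \<Sum>j<n. W $$ (i, j) * annih j \<psi> m))) \<and>
     U vacuum = vacuum"

text \<open>Fourth-order moment matrix sigma^(2), n^2 x n^2, row (i,j) \<mapsto> i*n+j, column (k,l) \<mapsto> k*n+l,
  matching the basis |i> \<otimes> |j> of C^n \<otimes> C^n.\<close>
definition moment2 :: "nat \<Rightarrow> fstate \<Rightarrow> complex mat" where
  "moment2 n \<psi> = mat (n*n) (n*n) (\<lambda>(r, c).
      finner \<psi> (annih (r div n) (annih (r mod n) (creat (c div n) (creat (c mod n) \<psi>)))))"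

definition tensor_vec :: "complex vec \<Rightarrow> complex vec \<Rightarrow> complex vec" where
  "tensor_vec u v = vec (dim_vec u * dim_vec v) (\<lambda>r. u $ (r div dim_vec v) * v $ (r mod dim_vec v))"

definition outer :: "complex vec \<Rightarrow> complex vec \<Rightarrow> complex mat" where
  "outer u v = mat (dim_vec u) (dim_vec v) (\<lambda>(r, c). u $ r * cnj (v $ c))"

definition swap_mat :: "nat \<Rightarrow> complex mat" where
  "swap_mat n = mat (n*n) (n*n) (\<lambda>(r, c). if r div n = c mod n \<and> r mod n = c div n then 1 else 0)"

definition col_proj_sum :: "nat \<Rightarrow> complex mat \<Rightarrow> complex mat" where
  "col_proj_sum n W = mat (n*n) (n*n) (\<lambda>(r, c).
      \<Sum>i<n. outer (tensor_vec (col W i) (col W i)) (tensor_vec (col W i) (col W i)) $$ (r, c))"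

end

theory Submission
  imports Defs
begin

text \<open>
  Conjugation by \<open>\<U>\<^sub>W\<close> replaces \<open>a\<^sub>i\<close> by \<open>\<Sum>\<^sub>j W\<^sub>i\<^sub>j a\<^sub>j\<close>, so each entry of the
  moment matrix is a combination, with coefficients
  \<open>W\<^sub>i\<^sub>p W\<^sub>j\<^sub>q W\<^sub>k\<^sub>r\<^sup>* W\<^sub>l\<^sub>s\<^sup>*\<close>, of the Fock-basis expectations
  \<open>\<langle>b\<^sup>n| a\<^sub>p a\<^sub>q a\<^sub>r\<^sup>\<dagger> a\<^sub>s\<^sup>\<dagger> |b\<^sup>n\<rangle>\<close>. These vanish unless \<open>{r,s} = {p,q}\<close>, and equal
  \<open>(b+1)\<^sup>2\<close> for \<open>p \<noteq> q\<close> and \<open>(b+1)(b+2)\<close> for \<open>p = q\<close>; that is, they are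
  \<open>(b+1)\<^sup>2(\<delta>\<^sub>p\<^sub>r\<delta>\<^sub>q\<^sub>s + \<delta>\<^sub>p\<^sub>s\<delta>\<^sub>q\<^sub>r) - b(b+1)\<delta>\<^sub>p\<^sub>q\<^sub>r\<^sub>s\<close>. Summing against the coefficients,
  unitarity of the rows of \<open>W\<close> collapses the first two terms to \<open>I \<otimes> I + SWAP\<close> and leaves
  \<open>\<Sum>\<^sub>p |w\<^sub>p w\<^sub>p\<rangle>\<langle>w\<^sub>p w\<^sub>p|\<close> from the last. That matrix is \<open>V V\<^sup>\<dagger>\<close> for the
  \<open>n\<^sup>2 \<times> n\<close> matrix \<open>V\<close> with columns \<open>w\<^sub>p \<otimes> w\<^sub>p\<close>, and unitarity of the columns of \<open>W\<close>
  makes \<open>V\<close> an isometry, so \<open>V V\<^sup>\<dagger>\<close> is an orthogonal projector of rank \<open>n\<close>.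
\<close>

section \<open>Finitely supported Fock states\<close>

lemma finner_eq_sum:
  assumes "finite S" "{m. \<phi> m \<noteq> 0} \<subseteq> S"
  shows "finner \<phi> \<psi> = (\<Sum>m\<in>S. cnj (\<phi> m) * \<psi> m)"
  unfolding finner_def using assms by (intro sum.mono_neutral_left) auto

lemma finner_scaled_fock_basis: "finner (\<lambda>x. \<alpha> * fock_basis M x) \<psi> = cnj \<alpha> * \<psi> M"
proof (cases "\<alpha> = 0")
  case False
  then have "{m. \<alpha> * fock_basis M m \<noteq> 0} = {M}" by (auto simp: fock_basis_def)
  then show ?thesis by (simp add: finner_def fock_basis_def)
qed (simp add: finner_def)

lemma finner_fock_basis: "finner (fock_basis M) \<psi> = \<psi> M"
  using finner_scaled_fock_basis[of 1 M \<psi>] by simp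

lemma finner_sum_right: "finner \<phi> (\<lambda>m. \<Sum>j\<in>J. c j * x j m) = (\<Sum>j\<in>J. c j * finner \<phi> (x j))"
  unfolding finner_def by (simp add: sum_distrib_left sum.swap[of _ J] mult_ac)

lemma finner_commute:
  assumes "finite {m. \<phi> m \<noteq> 0}" "finite {m. \<psi> m \<noteq> 0}"
  shows "finner \<psi> \<phi> = cnj (finner \<phi> \<psi>)"
proof -
  let ?S = "{m. \<phi> m \<noteq> 0} \<union> {m. \<psi> m \<noteq> 0}"
  have "finner \<psi> \<phi> = (\<Sum>m\<in>?S. cnj (\<psi> m) * \<phi> m)" "finner \<phi> \<psi> = (\<Sum>m\<in>?S. cnj (\<phi> m) * \<psi> m)"
    using assms by (auto intro: finner_eq_sum)
  then show ?thesis by (simp add: mult.commute)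
qed

lemma support_creat: "{m. creat i \<phi> m \<noteq> 0} \<subseteq> (\<lambda>m. m(i := m i + 1)) ` {m. \<phi> m \<noteq> 0}"
proof
  fix m assume "m \<in> {m. creat i \<phi> m \<noteq> 0}"
  then have "m i \<noteq> 0" "\<phi> (m(i := m i - 1)) \<noteq> 0" by (auto simp: creat_def split: if_splits)
  moreover have "m = (m(i := m i - 1))(i := (m(i := m i - 1)) i + 1)" using \<open>m i \<noteq> 0\<close> by auto
  ultimately show "m \<in> (\<lambda>m. m(i := m i + 1)) ` {m. \<phi> m \<noteq> 0}" by blast
qed

lemma support_annih: "{m. annih i \<phi> m \<noteq> 0} \<subseteq> (\<lambda>m. m(i := m i - 1)) ` {m. \<phi> m \<noteq> 0}"
proof
  fix m assume "m \<in> {m. annih i \<phi> m \<noteq> 0}"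
  then have "\<phi> (m(i := m i + 1)) \<noteq> 0" by (auto simp: annih_def)
  moreover have "m = (m(i := m i + 1))(i := (m(i := m i + 1)) i - 1)" by auto
  ultimately show "m \<in> (\<lambda>m. m(i := m i - 1)) ` {m. \<phi> m \<noteq> 0}" by blast
qed

lemma inj_add_boson: "inj (\<lambda>m::occ. m(i := m i + 1))"
proof (rule injI)
  fix x y :: occ assume h: "x(i := x i + 1) = y(i := y i + 1)"
  show "x = y"
  proof
    fix k show "x k = y k" using fun_cong[OF h, of k] by (cases "k = i") auto
  qed
qed

lemma finner_creat_annih:
  assumes "finite {m. \<phi> m \<noteq> 0}"
  shows "finner (creat i \<phi>) \<psi> = finner \<phi> (annih i \<psi>)"
proof -
  let ?g = "\<lambda>m::occ. m(i := m i + 1)"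
  have "finner (creat i \<phi>) \<psi> = (\<Sum>m\<in>?g ` {m. \<phi> m \<noteq> 0}. cnj (creat i \<phi> m) * \<psi> m)"
    using assms support_creat by (intro finner_eq_sum) auto
  also have "\<dots> = (\<Sum>m\<in>{m. \<phi> m \<noteq> 0}. cnj (creat i \<phi> (?g m)) * \<psi> (?g m))"
    using inj_add_boson[of i] by (subst sum.reindex) (auto simp: inj_on_def)
  also have "\<dots> = (\<Sum>m\<in>{m. \<phi> m \<noteq> 0}. cnj (\<phi> m) * annih i \<psi> m)"
  proof (rule sum.cong)
    fix m
    have "(?g m)(i := ?g m i - 1) = m" by auto
    then show "cnj (creat i \<phi> (?g m)) * \<psi> (?g m) = cnj (\<phi> m) * annih i \<psi> m"
      unfolding creat_def annih_def by simp
  qed simp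
  finally show ?thesis by (simp add: finner_def)
qed

lemma fock_state_creat:
  assumes "i < n" "fock_state n \<psi>"
  shows "fock_state n (creat i \<psi>)"
  unfolding fock_state_def
proof
  show "finite {m. creat i \<psi> m \<noteq> 0}"
    using assms support_creat[of i \<psi>] by (auto simp: fock_state_def intro: finite_subset)
  show "\<forall>m. creat i \<psi> m \<noteq> 0 \<longrightarrow> valid_occ n m"
  proof (intro allI impI)
    fix m assume "creat i \<psi> m \<noteq> 0"
    then have "\<psi> (m(i := m i - 1)) \<noteq> 0" by (auto simp: creat_def split: if_splits)
    then have "valid_occ n (m(i := m i - 1))" using assms by (auto simp: fock_state_def)
    then show "valid_occ n m" using assms(1) unfolding valid_occ_def by (metis fun_upd_other leD)
  qed
qed

lemma fock_state_annih:
  assumes "i < n" "fock_state n \<psi>"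
  shows "fock_state n (annih i \<psi>)"
  unfolding fock_state_def
proof
  show "finite {m. annih i \<psi> m \<noteq> 0}"
    using assms support_annih[of i \<psi>] by (auto simp: fock_state_def intro: finite_subset)
  show "\<forall>m. annih i \<psi> m \<noteq> 0 \<longrightarrow> valid_occ n m"
  proof (intro allI impI)
    fix m assume "annih i \<psi> m \<noteq> 0"
    then have "\<psi> (m(i := m i + 1)) \<noteq> 0" by (auto simp: annih_def)
    then have "valid_occ n (m(i := m i + 1))" using assms by (auto simp: fock_state_def)
    then show "valid_occ n m" using assms(1) unfolding valid_occ_def by (metis fun_upd_other leD)
  qed
qed

lemma fock_state_sum:
  assumes "finite J" "\<And>j. j \<in> J \<Longrightarrow> fock_state n (x j)"
  shows "fock_state n (\<lambda>m. \<Sum>j\<in>J. c j * x j m)"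
proof -
  have supp: "\<exists>j\<in>J. x j m \<noteq> 0" if "(\<Sum>j\<in>J. c j * x j m) \<noteq> 0" for m
    using that sum.neutral[of J "\<lambda>j. c j * x j m"] by (metis mult_zero_right)
  then have "{m. (\<Sum>j\<in>J. c j * x j m) \<noteq> 0} \<subseteq> (\<Union>j\<in>J. {m. x j m \<noteq> 0})" by blast
  moreover have "finite (\<Union>j\<in>J. {m. x j m \<noteq> 0})" using assms by (auto simp: fock_state_def)
  ultimately show ?thesis
    using supp assms(2) unfolding fock_state_def by (meson finite_subset)
qed

lemma fock_state_fock_basis: "valid_occ n M \<Longrightarrow> fock_state n (fock_basis M)"
  by (auto simp: fock_state_def fock_basis_def)

lemma fock_state_eqI:
  assumes "fock_state n x" "fock_state n y" "\<And>\<phi>. fock_state n \<phi> \<Longrightarrow> finner \<phi> x = finner \<phi> y"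
  shows "x = y"
proof
  fix m show "x m = y m"
  proof (cases "valid_occ n m")
    case True
    then show ?thesis using assms(3)[OF fock_state_fock_basis[OF True]] by (simp add: finner_fock_basis)
  next
    case False
    then show ?thesis using assms(1,2) unfolding fock_state_def by metis
  qed
qed

lemma annih_sum: "annih p (\<lambda>m. \<Sum>j\<in>J. f j m) = (\<lambda>m. \<Sum>j\<in>J. annih p (f j) m)"
  by (simp add: annih_def fun_eq_iff sum_distrib_left)

lemma creat_sum: "creat p (\<lambda>m. \<Sum>j\<in>J. f j m) = (\<lambda>m. \<Sum>j\<in>J. creat p (f j) m)"
  by (simp add: creat_def fun_eq_iff sum_distrib_left)

lemma annih_scaled: "annih p (\<lambda>m. c * f m) = (\<lambda>m. c * annih p f m)"
  by (simp add: annih_def fun_eq_iff mult_ac)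

lemma creat_scaled: "creat p (\<lambda>m. c * f m) = (\<lambda>m. c * creat p f m)"
  by (simp add: creat_def fun_eq_iff mult_ac)

section \<open>Passive Gaussian unitaries\<close>

text \<open>The Heisenberg-picture operators \<open>U\<^sup>\<dagger> a\<^sub>k U\<close> and \<open>U\<^sup>\<dagger> a\<^sub>k\<^sup>\<dagger> U\<close> of a passive unitary.\<close>

definition annih_mix :: "nat \<Rightarrow> complex mat \<Rightarrow> nat \<Rightarrow> fstate \<Rightarrow> fstate" where
  "annih_mix n W k \<psi> = (\<lambda>m. \<Sum>j<n. W $$ (k, j) * annih j \<psi> m)"

definition creat_mix :: "nat \<Rightarrow> complex mat \<Rightarrow> nat \<Rightarrow> fstate \<Rightarrow> fstate" where
  "creat_mix n W k \<psi> = (\<lambda>m. \<Sum>j<n. cnj (W $$ (k, j)) * creat j \<psi> m)"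

lemma fock_state_annih_mix: "fock_state n \<psi> \<Longrightarrow> fock_state n (annih_mix n W k \<psi>)"
  unfolding annih_mix_def by (rule fock_state_sum) (auto intro: fock_state_annih)

lemma fock_state_creat_mix: "fock_state n \<psi> \<Longrightarrow> fock_state n (creat_mix n W k \<psi>)"
  unfolding creat_mix_def by (rule fock_state_sum) (auto intro: fock_state_creat)

lemma passive_gaussian_unitaryE:
  assumes "passive_gaussian_unitary n W U"
  obtains U' where
    "\<And>\<psi>. fock_state n \<psi> \<Longrightarrow> fock_state n (U \<psi>)"
    "\<And>\<psi>. fock_state n \<psi> \<Longrightarrow> fock_state n (U' \<psi>)"
    "\<And>\<phi> \<psi>. fock_state n \<phi> \<Longrightarrow> fock_state n \<psi> \<Longrightarrow> finner (U \<phi>) \<psi> = finner \<phi> (U' \<psi>)"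
    "\<And>\<psi>. fock_state n \<psi> \<Longrightarrow> U' (U \<psi>) = \<psi>"
    "\<And>\<psi>. fock_state n \<psi> \<Longrightarrow> U (U' \<psi>) = \<psi>"
    "\<And>k \<psi>. k < n \<Longrightarrow> fock_state n \<psi> \<Longrightarrow> U' (annih k (U \<psi>)) = annih_mix n W k \<psi>"
proof -
  from assms obtain U' where UF: "\<forall>\<psi>. fock_state n \<psi> \<longrightarrow> fock_state n (U \<psi>)"
    and U'F: "\<forall>\<psi>. fock_state n \<psi> \<longrightarrow> fock_state n (U' \<psi>)"
    and adj: "\<forall>\<phi> \<psi>. fock_state n \<phi> \<longrightarrow> fock_state n \<psi> \<longrightarrow> finner (U \<phi>) \<psi> = finner \<phi> (U' \<psi>)"
    and inv: "\<forall>\<psi>. fock_state n \<psi> \<longrightarrow> U' (U \<psi>) = \<psi> \<and> U (U' \<psi>) = \<psi>"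
    and ann: "\<forall>i<n. \<forall>\<psi>. fock_state n \<psi> \<longrightarrow> U' (annih i (U \<psi>)) = (\<lambda>m. \<Sum>j<n. W $$ (i, j) * annih j \<psi> m)"
    unfolding passive_gaussian_unitary_def by blast
  show thesis
  proof (rule that)
    show "\<And>k \<psi>. k < n \<Longrightarrow> fock_state n \<psi> \<Longrightarrow> U' (annih k (U \<psi>)) = annih_mix n W k \<psi>"
      using ann by (simp add: annih_mix_def)
  qed (use UF U'F adj inv in blast)+
qed

lemma finner_passive_unitary:
  assumes "passive_gaussian_unitary n W U" "fock_state n x" "fock_state n y"
  shows "finner (U x) (U y) = finner x y"
  using assms by (elim passive_gaussian_unitaryE) simp

lemma annih_passive_unitary:
  assumes U: "passive_gaussian_unitary n W U" and k: "k < n" and \<xi>: "fock_state n \<xi>"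
  shows "annih k (U \<xi>) = U (annih_mix n W k \<xi>)"
proof -
  obtain U' where UF: "\<And>\<psi>. fock_state n \<psi> \<Longrightarrow> fock_state n (U \<psi>)"
    and inv: "\<And>\<psi>. fock_state n \<psi> \<Longrightarrow> U (U' \<psi>) = \<psi>"
    and ann: "\<And>k \<psi>. k < n \<Longrightarrow> fock_state n \<psi> \<Longrightarrow> U' (annih k (U \<psi>)) = annih_mix n W k \<psi>"
    using U by (elim passive_gaussian_unitaryE) blast
  have "annih k (U \<xi>) = U (U' (annih k (U \<xi>)))"
    using inv[OF fock_state_annih[OF k UF[OF \<xi>]]] by simp
  also have "U' (annih k (U \<xi>)) = annih_mix n W k \<xi>" using ann[OF k \<xi>] .
  finally show ?thesis .
qed

text \<open>The creation operator is transported through \<open>U\<close> by taking adjoints in the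
  annihilation relation, tested against all finitely supported states.\<close>

lemma creat_passive_unitary:
  assumes U: "passive_gaussian_unitary n W U" and k: "k < n" and \<xi>: "fock_state n \<xi>"
  shows "creat k (U \<xi>) = U (creat_mix n W k \<xi>)"
proof -
  obtain U' where UF: "\<And>\<psi>. fock_state n \<psi> \<Longrightarrow> fock_state n (U \<psi>)"
    and U'F: "\<And>\<psi>. fock_state n \<psi> \<Longrightarrow> fock_state n (U' \<psi>)"
    and adj: "\<And>\<phi> \<psi>. fock_state n \<phi> \<Longrightarrow> fock_state n \<psi> \<Longrightarrow> finner (U \<phi>) \<psi> = finner \<phi> (U' \<psi>)"
    and inv: "\<And>\<psi>. fock_state n \<psi> \<Longrightarrow> U (U' \<psi>) = \<psi>"
    and ann: "\<And>k \<psi>. k < n \<Longrightarrow> fock_state n \<psi> \<Longrightarrow> U' (annih k (U \<psi>)) = annih_mix n W k \<psi>"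
    using U by (elim passive_gaussian_unitaryE) blast
  define z where "z = creat k (U \<xi>)"
  have zF: "fock_state n z" unfolding z_def using fock_state_creat k UF \<xi> by blast
  have fin: "fock_state n \<psi> \<Longrightarrow> finite {m. \<psi> m \<noteq> 0}" for \<psi> by (simp add: fock_state_def)
  have "U' z = creat_mix n W k \<xi>"
  proof (rule fock_state_eqI[of n])
    fix \<phi> assume \<phi>: "fock_state n \<phi>"
    have "finner z (U \<phi>) = finner (U \<xi>) (annih k (U \<phi>))"
      unfolding z_def using UF \<xi> fin by (intro finner_creat_annih) blast
    also have "\<dots> = finner \<xi> (U' (annih k (U \<phi>)))"
      using adj[OF \<xi> fock_state_annih[OF k UF[OF \<phi>]]] .
    also have "\<dots> = finner \<xi> (annih_mix n W k \<phi>)" using ann[OF k \<phi>] by simp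
    also have "\<dots> = (\<Sum>j<n. W $$ (k, j) * finner (creat j \<xi>) \<phi>)"
      unfolding annih_mix_def finner_sum_right using finner_creat_annih[OF fin[OF \<xi>]] by simp
    finally have "cnj (finner z (U \<phi>)) = (\<Sum>j<n. cnj (W $$ (k, j)) * cnj (finner (creat j \<xi>) \<phi>))"
      by simp
    also have "\<dots> = finner \<phi> (creat_mix n W k \<xi>)"
      unfolding creat_mix_def finner_sum_right
      using finner_commute[OF fin[OF \<phi>] fin[OF fock_state_creat[OF _ \<xi>]]] by simp
    finally show "finner \<phi> (U' z) = finner \<phi> (creat_mix n W k \<xi>)"
      using adj[OF \<phi> zF] finner_commute[OF fin[OF zF] fin[OF UF[OF \<phi>]]] by simp
  qed (use U'F zF \<xi> fock_state_creat_mix in blast)+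
  then show ?thesis using inv[OF zF] by (simp add: z_def)
qed

lemma four_point_passive_unitary:
  assumes U: "passive_gaussian_unitary n W U" and idx: "i < n" "j < n" "k < n" "l < n"
    and \<xi>: "fock_state n \<xi>"
  shows "finner (U \<xi>) (annih i (annih j (creat k (creat l (U \<xi>)))))
       = finner \<xi> (annih_mix n W i (annih_mix n W j (creat_mix n W k (creat_mix n W l \<xi>))))"
proof -
  have f1: "fock_state n (creat_mix n W l \<xi>)" using \<xi> by (rule fock_state_creat_mix)
  have f2: "fock_state n (creat_mix n W k (creat_mix n W l \<xi>))" using f1 by (rule fock_state_creat_mix)
  have f3: "fock_state n (annih_mix n W j (creat_mix n W k (creat_mix n W l \<xi>)))"
    using f2 by (rule fock_state_annih_mix)
  have "annih i (annih j (creat k (creat l (U \<xi>))))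
      = U (annih_mix n W i (annih_mix n W j (creat_mix n W k (creat_mix n W l \<xi>))))"
    by (simp add: creat_passive_unitary[OF U idx(4) \<xi>] creat_passive_unitary[OF U idx(3) f1]
        annih_passive_unitary[OF U idx(2) f2] annih_passive_unitary[OF U idx(1) f3])
  then show ?thesis using finner_passive_unitary[OF U \<xi> fock_state_annih_mix[OF f3]] by simp
qed

lemma four_point_mix_expand:
  "annih_mix n W i (annih_mix n W j (creat_mix n W k (creat_mix n W l \<phi>))) m =
   (\<Sum>p<n. \<Sum>q<n. \<Sum>r<n. \<Sum>s<n. W $$ (i,p) * W $$ (j,q) * cnj (W $$ (k,r)) * cnj (W $$ (l,s))
       * annih p (annih q (creat r (creat s \<phi>))) m)"
  unfolding annih_mix_def creat_mix_def
  by (simp only: annih_sum creat_sum annih_scaled creat_scaled sum_distrib_left mult.assoc)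

section \<open>Four-point functions in the Fock basis\<close>

lemma creat_fock_basis:
  "creat r (fock_basis M) = (\<lambda>x. of_real (sqrt (real (M r + 1))) * fock_basis (M(r := M r + 1)) x)"
proof
  fix x :: occ
  show "creat r (fock_basis M) x = of_real (sqrt (real (M r + 1))) * fock_basis (M(r := M r + 1)) x"
  proof (cases "x = M(r := M r + 1)")
    case False
    have "\<not> (x r \<noteq> 0 \<and> x(r := x r - 1) = M)"
    proof
      assume h: "x r \<noteq> 0 \<and> x(r := x r - 1) = M"
      have "x = M(r := M r + 1)"
      proof
        fix k show "x k = (M(r := M r + 1)) k"
          using fun_cong[OF conjunct2[OF h], of k] conjunct1[OF h] by (cases "k = r") auto
      qed
      then show False using False by simp
    qed
    then show ?thesis using False by (auto simp: creat_def fock_basis_def)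
  qed (simp add: creat_def fock_basis_def)
qed

definition occ_add2 :: "occ \<Rightarrow> nat \<Rightarrow> nat \<Rightarrow> occ" where
  "occ_add2 M p q = (\<lambda>k. M k + of_bool (k = p) + of_bool (k = q))"

definition creat2_coeff :: "occ \<Rightarrow> nat \<Rightarrow> nat \<Rightarrow> complex" where
  "creat2_coeff M p q = of_real (sqrt (real (M p + 1)) * sqrt (real (M q + of_bool (q = p) + 1)))"

lemma creat2_fock_basis:
  "creat q (creat p (fock_basis M)) = (\<lambda>x. creat2_coeff M p q * fock_basis (occ_add2 M p q) x)"
proof -
  have "(M(p := M p + 1))(q := (M(p := M p + 1)) q + 1) = occ_add2 M p q"
    by (auto simp: occ_add2_def)
  moreover have "(M(p := M p + 1)) q + 1 = M q + of_bool (q = p) + 1" by simp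
  ultimately show ?thesis
    by (simp add: creat_fock_basis creat_scaled creat2_coeff_def mult.assoc)
qed

lemma occ_add2_eq_iff: "occ_add2 M s r = occ_add2 M p q \<longleftrightarrow> (s = p \<and> r = q) \<or> (s = q \<and> r = p)"
proof
  assume "occ_add2 M s r = occ_add2 M p q"
  then have H: "of_bool (k = s) + of_bool (k = r) = (of_bool (k = p) + of_bool (k = q) :: nat)" for k
    unfolding occ_add2_def fun_eq_iff by (metis add.assoc add_left_cancel)
  have "s = p \<or> s = q" using H[of s] by (auto simp: of_bool_def split: if_splits)
  then show "(s = p \<and> r = q) \<or> (s = q \<and> r = p)" using H[of r] by (auto simp: of_bool_def split: if_splits)
qed (auto simp: occ_add2_def fun_eq_iff)

text \<open>Only the two orderings of the created bosons survive the vacuum-like contraction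
  \<open>\<langle>M| a\<^sub>p a\<^sub>q a\<^sub>r\<^sup>\<dagger> a\<^sub>s\<^sup>\<dagger> |M\<rangle> = \<langle>a\<^sub>q\<^sup>\<dagger> a\<^sub>p\<^sup>\<dagger> M | a\<^sub>r\<^sup>\<dagger> a\<^sub>s\<^sup>\<dagger> M\<rangle>\<close>.\<close>

lemma four_point_fock_basis:
  "annih p (annih q (creat r (creat s (fock_basis M)))) M =
     cnj (creat2_coeff M p q) * creat2_coeff M s r * of_bool ((s = p \<and> r = q) \<or> (s = q \<and> r = p))"
proof -
  have fin: "finite {m. fock_basis M m \<noteq> 0}" by (simp add: fock_basis_def)
  have fin2: "finite {m. creat p (fock_basis M) m \<noteq> 0}"
    using support_creat[of p "fock_basis M"] fin by (auto intro: finite_subset)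
  have "annih p (annih q (creat r (creat s (fock_basis M)))) M
      = finner (fock_basis M) (annih p (annih q (creat r (creat s (fock_basis M)))))"
    by (simp add: finner_fock_basis)
  also have "\<dots> = finner (creat q (creat p (fock_basis M))) (creat r (creat s (fock_basis M)))"
    by (simp add: finner_creat_annih[OF fin] finner_creat_annih[OF fin2])
  also have "\<dots> = cnj (creat2_coeff M p q) * creat2_coeff M s r * fock_basis (occ_add2 M s r) (occ_add2 M p q)"
    by (simp add: creat2_fock_basis finner_scaled_fock_basis)
  also have "fock_basis (occ_add2 M s r) (occ_add2 M p q) = of_bool ((s = p \<and> r = q) \<or> (s = q \<and> r = p))"
    unfolding fock_basis_def using occ_add2_eq_iff[of M s r p q] by auto
  finally show ?thesis .
qed

definition uniform_occ :: "nat \<Rightarrow> nat \<Rightarrow> occ" where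
  "uniform_occ n b = (\<lambda>k. if k < n then b else 0)"

lemma uniform_fock_eq: "uniform_fock n b = fock_basis (uniform_occ n b)"
  by (simp add: uniform_fock_def uniform_occ_def)

lemma fock_state_uniform_fock: "fock_state n (uniform_fock n b)"
  unfolding uniform_fock_eq by (rule fock_state_fock_basis) (simp add: valid_occ_def uniform_occ_def)

lemma norm_creat2_coeff_uniform:
  assumes "p < n" "q < n"
  shows "cnj (creat2_coeff (uniform_occ n b) p q) * creat2_coeff (uniform_occ n b) p q
       = of_nat ((b + 1) * (b + of_bool (q = p) + 1))"
proof -
  have sqrt_sq: "(sqrt x * sqrt y) * (sqrt x * sqrt y) = x * y" if "x \<ge> 0" "y \<ge> 0" for x y :: real
    using that by (simp add: real_sqrt_mult[symmetric])
  have "creat2_coeff (uniform_occ n b) p q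
      = of_real (sqrt (real (b + 1)) * sqrt (real (b + of_bool (q = p) + 1)))"
    using assms by (simp add: creat2_coeff_def uniform_occ_def)
  then have "cnj (creat2_coeff (uniform_occ n b) p q) * creat2_coeff (uniform_occ n b) p q
      = of_real (real (b + 1) * real (b + of_bool (q = p) + 1))"
    by (simp only: complex_cnj_complex_of_real sqrt_sq of_nat_0_le_iff flip: of_real_mult)
  then show ?thesis by (simp only: of_nat_mult[symmetric] of_real_of_nat_eq)
qed

lemma creat2_coeff_uniform_commute:
  assumes "p < n" "q < n"
  shows "creat2_coeff (uniform_occ n b) q p = creat2_coeff (uniform_occ n b) p q"
proof -
  have "of_bool (p = q) = (of_bool (q = p) :: nat)" by (simp add: eq_commute)
  then show ?thesis using assms unfolding creat2_coeff_def uniform_occ_def by simp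
qed

lemma four_point_uniform_fock:
  assumes "p < n" "q < n" "r < n" "s < n"
  shows "annih p (annih q (creat r (creat s (uniform_fock n b)))) (uniform_occ n b) =
    of_nat ((b+1)^2) * (of_bool (p = r \<and> q = s) + of_bool (p = s \<and> q = r))
     - of_nat (b*(b+1)) * of_bool (p = q \<and> q = r \<and> r = s)"
proof -
  let ?M = "uniform_occ n b"
  have val: "annih p (annih q (creat r (creat s (uniform_fock n b)))) ?M
      = cnj (creat2_coeff ?M p q) * creat2_coeff ?M s r * of_bool ((s = p \<and> r = q) \<or> (s = q \<and> r = p))"
    unfolding uniform_fock_eq by (rule four_point_fock_basis)
  consider (diagonal) "p = q" "r = p" "s = p"
    | (pair) "p \<noteq> q" "(s = p \<and> r = q) \<or> (s = q \<and> r = p)"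
    | (none) "\<not> ((s = p \<and> r = q) \<or> (s = q \<and> r = p))"
    by metis
  then show ?thesis
  proof cases
    case diagonal
    have "annih p (annih q (creat r (creat s (uniform_fock n b)))) ?M = of_nat ((b + 1) * (b + 1 + 1))"
      using val norm_creat2_coeff_uniform[OF assms(1,1), of b] diagonal by simp
    also have "\<dots> = of_nat ((b + 1)^2) * 2 - of_nat (b * (b + 1))"
    proof -
      have "(b + 1) * (b + 1 + 1) + b * (b + 1) = (b + 1)^2 * 2" by (simp add: power2_eq_square)
      then show ?thesis by (metis add_diff_cancel_right' of_nat_add of_nat_mult of_nat_numeral)
    qed
    finally show ?thesis using diagonal by simp
  next
    case pair
    have "creat2_coeff ?M s r = creat2_coeff ?M p q"
      using pair(2) creat2_coeff_uniform_commute[OF assms(1,2), of b] by (elim disjE conjE) simp_all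
    then have "annih p (annih q (creat r (creat s (uniform_fock n b)))) ?M
        = cnj (creat2_coeff ?M p q) * creat2_coeff ?M p q"
      using val pair by simp
    also have "\<dots> = of_nat ((b + 1) * (b + 1))"
      using norm_creat2_coeff_uniform[OF assms(1,2)] pair by simp
    finally show ?thesis using pair by (auto simp: power2_eq_square)
  next
    case none
    have n1: "\<not> (p = r \<and> q = s)" and n2: "\<not> (p = s \<and> q = r)" and n3: "\<not> (p = q \<and> q = r \<and> r = s)"
      using none by blast+
    show ?thesis
      unfolding val of_bool_def if_not_P[OF none] if_not_P[OF n1] if_not_P[OF n2] if_not_P[OF n3] by simp
  qed
qed

section \<open>Index contractions\<close>

lemma sum2_delta:
  fixes f :: "nat \<Rightarrow> nat \<Rightarrow> 'a :: comm_ring_1"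
  assumes "p < n" "q < n"
  shows "(\<Sum>r<n. \<Sum>s<n. f r s * of_bool (p = r \<and> q = s)) = f p q"
proof -
  have "(\<Sum>s<n. f r s * of_bool (p = r \<and> q = s)) = (if p = r then f r q else 0)" for r
    using assms by (cases "p = r") (simp_all add: of_bool_def if_distrib[of "times _"] sum.delta' cong: if_cong)
  then show ?thesis using assms by (simp add: sum.delta)
qed

lemma sum3_delta:
  fixes f :: "nat \<Rightarrow> nat \<Rightarrow> nat \<Rightarrow> 'a :: comm_ring_1"
  assumes "p < n"
  shows "(\<Sum>q<n. \<Sum>r<n. \<Sum>s<n. f q r s * of_bool (p = q \<and> q = r \<and> r = s)) = f p p p"
proof -
  have "(\<Sum>r<n. \<Sum>s<n. f q r s * of_bool (p = q \<and> q = r \<and> r = s)) = (if p = q then f q q q else 0)" for q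
  proof (cases "p = q")
    case True
    then have "(p = q \<and> q = r \<and> r = s) = (q = r \<and> q = s)" for r s by auto
    then show ?thesis using True assms sum2_delta[of q n q "f q"] by simp
  qed simp
  then show ?thesis using assms by (simp add: sum.delta)
qed

lemma sum4_contract:
  fixes X :: "nat \<Rightarrow> nat \<Rightarrow> nat \<Rightarrow> nat \<Rightarrow> 'a :: comm_ring_1"
  shows "(\<Sum>p<n. \<Sum>q<n. \<Sum>r<n. \<Sum>s<n. X p q r s *
            (A * (of_bool (p = r \<and> q = s) + of_bool (p = s \<and> q = r)) - B * of_bool (p = q \<and> q = r \<and> r = s)))
       = A * (\<Sum>p<n. \<Sum>q<n. X p q p q + X p q q p) - B * (\<Sum>p<n. X p p p p)"
proof -
  have split: "X p q r s * (A * (I1 + I2) - B * I3) = A * (X p q r s * I1) + A * (X p q r s * I2) - B * (X p q r s * I3)"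
    for p q r s and I1 I2 I3 :: 'a
    by (simp add: algebra_simps)
  have direct: "(\<Sum>r<n. \<Sum>s<n. X p q r s * of_bool (p = r \<and> q = s)) = X p q p q"
    if "p < n" "q < n" for p q
    using sum2_delta[OF that, of "X p q"] .
  have crossed: "(\<Sum>r<n. \<Sum>s<n. X p q r s * of_bool (p = s \<and> q = r)) = X p q q p"
    if "p < n" "q < n" for p q
    using sum2_delta[OF that(2,1), of "X p q"] unfolding conj_commute[of "p = _"] .
  have diagonal: "(\<Sum>q<n. \<Sum>r<n. \<Sum>s<n. X p q r s * of_bool (p = q \<and> q = r \<and> r = s)) = X p p p p"
    if "p < n" for p
    using sum3_delta[OF that, of "X p"] .
  have "(\<Sum>p<n. \<Sum>q<n. \<Sum>r<n. \<Sum>s<n. X p q r s *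
            (A * (of_bool (p = r \<and> q = s) + of_bool (p = s \<and> q = r)) - B * of_bool (p = q \<and> q = r \<and> r = s)))
      = A * (\<Sum>p<n. \<Sum>q<n. \<Sum>r<n. \<Sum>s<n. X p q r s * of_bool (p = r \<and> q = s))
        + A * (\<Sum>p<n. \<Sum>q<n. \<Sum>r<n. \<Sum>s<n. X p q r s * of_bool (p = s \<and> q = r))
        - B * (\<Sum>p<n. \<Sum>q<n. \<Sum>r<n. \<Sum>s<n. X p q r s * of_bool (p = q \<and> q = r \<and> r = s))"
    by (simp only: split sum.distrib sum_subtractf sum_distrib_left)
  also have "\<dots> = A * (\<Sum>p<n. \<Sum>q<n. X p q p q) + A * (\<Sum>p<n. \<Sum>q<n. X p q q p) - B * (\<Sum>p<n. X p p p p)"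
    using direct crossed diagonal by simp
  finally show ?thesis by (simp only: sum.distrib distrib_left)
qed

section \<open>Adjoints and unitary matrices\<close>

lemma mat_adjoint_dims:
  "dim_row (mat_adjoint M) = dim_col M" "dim_col (mat_adjoint M) = dim_row M"
  by (auto simp: mat_adjoint_def)

lemma index_mat_adjoint:
  "i < dim_col M \<Longrightarrow> j < dim_row M \<Longrightarrow> mat_adjoint M $$ (i, j) = cnj (M $$ (j, i))"
  by (simp add: mat_adjoint_def mat_of_rows_index)

lemma mat_adjoint_carrier: "V \<in> carrier_mat m k \<Longrightarrow> mat_adjoint V \<in> carrier_mat k m"
  unfolding carrier_mat_def by (simp add: mat_adjoint_dims)

lemma index_mult_mat_adjoint:
  assumes "dim_col M = dim_col N" "i < dim_row M" "j < dim_row N"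
  shows "(M * mat_adjoint N) $$ (i, j) = (\<Sum>t<dim_col M. M $$ (i, t) * cnj (N $$ (j, t)))"
  using assms by (simp add: mat_adjoint_dims index_mat_adjoint scalar_prod_def lessThan_atLeast0)

lemma index_mat_adjoint_mult:
  assumes "dim_row M = dim_row N" "i < dim_col M" "j < dim_col N"
  shows "(mat_adjoint M * N) $$ (i, j) = (\<Sum>t<dim_row M. cnj (M $$ (t, i)) * N $$ (t, j))"
  using assms by (simp add: mat_adjoint_dims index_mat_adjoint scalar_prod_def lessThan_atLeast0)

lemma unitary_rows_orthonormal:
  assumes "W \<in> carrier_mat n n" "W * mat_adjoint W = 1\<^sub>m n" "i < n" "k < n"
  shows "(\<Sum>p<n. W $$ (i, p) * cnj (W $$ (k, p))) = of_bool (i = k)"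
proof -
  have "(W * mat_adjoint W) $$ (i, k) = (\<Sum>p<n. W $$ (i, p) * cnj (W $$ (k, p)))"
    using index_mult_mat_adjoint[of W W i k] assms(1,3,4) by simp
  then show ?thesis using assms(2-4) by (simp add: of_bool_def)
qed

lemma unitary_cols_orthonormal:
  assumes "W \<in> carrier_mat n n" "mat_adjoint W * W = 1\<^sub>m n" "p < n" "q < n"
  shows "(\<Sum>i<n. cnj (W $$ (i, p)) * W $$ (i, q)) = of_bool (p = q)"
proof -
  have "(mat_adjoint W * W) $$ (p, q) = (\<Sum>i<n. cnj (W $$ (i, p)) * W $$ (i, q))"
    using index_mat_adjoint_mult[of W W p q] assms(1,3,4) by simp
  then show ?thesis using assms(2-4) by (simp add: of_bool_def)
qed

section \<open>The moment matrix\<close>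

lemma four_point_unitary_contract:
  fixes \<alpha> \<beta> :: complex
  assumes W: "W \<in> carrier_mat n n" "W * mat_adjoint W = 1\<^sub>m n"
    and idx: "i < n" "j < n" "k < n" "l < n"
  shows "(\<Sum>p<n. \<Sum>q<n. \<Sum>r<n. \<Sum>s<n. W $$ (i,p) * W $$ (j,q) * cnj (W $$ (k,r)) * cnj (W $$ (l,s))
      * (\<alpha> * (of_bool (p = r \<and> q = s) + of_bool (p = s \<and> q = r)) - \<beta> * of_bool (p = q \<and> q = r \<and> r = s)))
    = \<alpha> * (of_bool (i = k \<and> j = l) + of_bool (i = l \<and> j = k))
      - \<beta> * (\<Sum>p<n. W $$ (i,p) * W $$ (j,p) * cnj (W $$ (k,p)) * cnj (W $$ (l,p)))"
proof -
  have "(\<Sum>p<n. \<Sum>q<n. W $$ (i,p) * W $$ (j,q) * cnj (W $$ (k,p)) * cnj (W $$ (l,q))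
                     + W $$ (i,p) * W $$ (j,q) * cnj (W $$ (k,q)) * cnj (W $$ (l,p)))
      = (\<Sum>p<n. \<Sum>q<n. (W $$ (i,p) * cnj (W $$ (k,p))) * (W $$ (j,q) * cnj (W $$ (l,q))))
        + (\<Sum>p<n. \<Sum>q<n. (W $$ (i,p) * cnj (W $$ (l,p))) * (W $$ (j,q) * cnj (W $$ (k,q))))"
    by (simp only: sum.distrib mult_ac)
  also have "\<dots> = (\<Sum>p<n. W $$ (i, p) * cnj (W $$ (k, p))) * (\<Sum>p<n. W $$ (j, p) * cnj (W $$ (l, p)))
       + (\<Sum>p<n. W $$ (i, p) * cnj (W $$ (l, p))) * (\<Sum>p<n. W $$ (j, p) * cnj (W $$ (k, p)))"
    by (simp only: sum_product)
  also have "\<dots> = of_bool (i = k \<and> j = l) + of_bool (i = l \<and> j = k)"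
    unfolding unitary_rows_orthonormal[OF W idx(1,3)] unitary_rows_orthonormal[OF W idx(2,4)]
      unitary_rows_orthonormal[OF W idx(1,4)] unitary_rows_orthonormal[OF W idx(2,3)]
    by (simp only: of_bool_conj)
  finally have pairs: "(\<Sum>p<n. \<Sum>q<n. W $$ (i,p) * W $$ (j,q) * cnj (W $$ (k,p)) * cnj (W $$ (l,q))
                     + W $$ (i,p) * W $$ (j,q) * cnj (W $$ (k,q)) * cnj (W $$ (l,p)))
      = of_bool (i = k \<and> j = l) + of_bool (i = l \<and> j = k)" .
  show ?thesis
    unfolding sum4_contract[of "\<lambda>p q r s. W $$ (i,p) * W $$ (j,q) * cnj (W $$ (k,r)) * cnj (W $$ (l,s))"] pairs ..
qed

lemma div_mod_less_square: "r < n * n \<Longrightarrow> r div n < n \<and> r mod n < (n::nat)"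
  by (metis less_mult_imp_div_less mod_less_divisor mult_is_0 not_gr_zero not_less_zero)

lemma index_col_proj_sum:
  assumes "W \<in> carrier_mat n n" "r < n * n" "c < n * n"
  shows "col_proj_sum n W $$ (r, c)
       = (\<Sum>p<n. W $$ (r div n, p) * W $$ (r mod n, p) * cnj (W $$ (c div n, p)) * cnj (W $$ (c mod n, p)))"
  using assms div_mod_less_square[OF assms(2)] div_mod_less_square[OF assms(3)]
  by (simp add: col_proj_sum_def outer_def tensor_vec_def mult_ac)

lemma col_proj_sum_carrier: "col_proj_sum n W \<in> carrier_mat (n * n) (n * n)"
  by (simp add: col_proj_sum_def)

lemma swap_mat_carrier: "swap_mat n \<in> carrier_mat (n * n) (n * n)"
  by (simp add: swap_mat_def)

lemma index_moment_formula:
  fixes \<alpha> \<beta> :: complex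
  assumes "W \<in> carrier_mat n n" "r < n * n" "c < n * n"
  shows "(\<alpha> \<cdot>\<^sub>m (1\<^sub>m (n*n) + swap_mat n) - \<beta> \<cdot>\<^sub>m col_proj_sum n W) $$ (r, c)
       = \<alpha> * (of_bool (r div n = c div n \<and> r mod n = c mod n) + of_bool (r div n = c mod n \<and> r mod n = c div n))
         - \<beta> * (\<Sum>p<n. W $$ (r div n, p) * W $$ (r mod n, p) * cnj (W $$ (c div n, p)) * cnj (W $$ (c mod n, p)))"
proof -
  have rc: "r = c \<longleftrightarrow> r div n = c div n \<and> r mod n = c mod n" by (metis div_mult_mod_eq)
  have "(\<alpha> \<cdot>\<^sub>m (1\<^sub>m (n*n) + swap_mat n) - \<beta> \<cdot>\<^sub>m col_proj_sum n W) $$ (r, c)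
      = \<alpha> * (1\<^sub>m (n*n) $$ (r, c) + swap_mat n $$ (r, c)) - \<beta> * col_proj_sum n W $$ (r, c)"
    using assms(2,3) col_proj_sum_carrier[of n W] swap_mat_carrier[of n] by simp
  also have "1\<^sub>m (n*n) $$ (r, c) = of_bool (r div n = c div n \<and> r mod n = c mod n)"
    using assms(2,3) rc by (simp add: of_bool_def)
  also have "swap_mat n $$ (r, c) = of_bool (r div n = c mod n \<and> r mod n = c div n)"
    using assms(2,3) by (simp add: swap_mat_def of_bool_def)
  also note index_col_proj_sum[OF assms]
  finally show ?thesis .
qed

lemma moment2_passive_unitary_uniform:
  assumes W: "W \<in> carrier_mat n n" "W * mat_adjoint W = 1\<^sub>m n"
    and U: "passive_gaussian_unitary n W U"
  shows "moment2 n (U (uniform_fock n b))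
       = of_nat ((b+1)^2) \<cdot>\<^sub>m (1\<^sub>m (n*n) + swap_mat n) - of_nat (b*(b+1)) \<cdot>\<^sub>m col_proj_sum n W"
    (is "_ = ?rhs")
proof (rule eq_matI)
  fix r c assume "r < dim_row ?rhs" "c < dim_col ?rhs"
  then have r: "r < n * n" and c: "c < n * n" using col_proj_sum_carrier[of n W] by auto
  define i j k l where "i = r div n" "j = r mod n" "k = c div n" "l = c mod n"
  have idx: "i < n" "j < n" "k < n" "l < n"
    using div_mod_less_square[OF r] div_mod_less_square[OF c] by (simp_all add: i_j_k_l_def)
  let ?\<phi> = "uniform_fock n b"
  have "moment2 n (U ?\<phi>) $$ (r, c) = finner (U ?\<phi>) (annih i (annih j (creat k (creat l (U ?\<phi>)))))"
    using r c by (simp add: moment2_def i_j_k_l_def)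
  also have "\<dots> = annih_mix n W i (annih_mix n W j (creat_mix n W k (creat_mix n W l ?\<phi>))) (uniform_occ n b)"
    using four_point_passive_unitary[OF U idx fock_state_uniform_fock]
    by (simp add: uniform_fock_eq finner_fock_basis)
  also have "\<dots> = (\<Sum>p<n. \<Sum>q<n. \<Sum>r<n. \<Sum>s<n. W $$ (i,p) * W $$ (j,q) * cnj (W $$ (k,r)) * cnj (W $$ (l,s))
      * (of_nat ((b+1)^2) * (of_bool (p = r \<and> q = s) + of_bool (p = s \<and> q = r))
         - of_nat (b*(b+1)) * of_bool (p = q \<and> q = r \<and> r = s)))"
    unfolding four_point_mix_expand by (intro sum.cong refl) (simp add: four_point_uniform_fock)
  also have "\<dots> = of_nat ((b+1)^2) * (of_bool (i = k \<and> j = l) + of_bool (i = l \<and> j = k))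
      - of_nat (b*(b+1)) * (\<Sum>p<n. W $$ (i,p) * W $$ (j,p) * cnj (W $$ (k,p)) * cnj (W $$ (l,p)))"
    by (rule four_point_unitary_contract[OF W idx])
  also have "\<dots> = ?rhs $$ (r, c)"
    unfolding index_moment_formula[OF W(1) r c] i_j_k_l_def ..
  finally show "moment2 n (U ?\<phi>) $$ (r, c) = ?rhs $$ (r, c)" .
qed (use col_proj_sum_carrier[of n W] in \<open>simp_all add: moment2_def\<close>)


section \<open>Orthogonal projectors from isometries\<close>

lemma sum_div_mod:
  fixes g :: "nat \<Rightarrow> nat \<Rightarrow> 'a :: comm_monoid_add"
  shows "(\<Sum>t<n*n. g (t div n) (t mod n)) = (\<Sum>i<n. \<Sum>j<n. g i j)"
proof -
  have "(\<Sum>t<n*n. g (t div n) (t mod n)) = (\<Sum>(i,j)\<in>{..<n}\<times>{..<n}. g i j)"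
  proof (rule sum.reindex_bij_witness[where i="\<lambda>(i,j). i*n+j" and j="\<lambda>t. (t div n, t mod n)"])
    fix t assume "t \<in> {..<n*n}"
    then show "(t div n, t mod n) \<in> {..<n} \<times> {..<n}" using div_mod_less_square by auto
  next
    fix a assume "a \<in> {..<n} \<times> {..<n}"
    then obtain i j where ij: "a = (i, j)" "i < n" "j < n" by auto
    have "i * n + j < (i + 1) * n" using ij by simp
    also have "\<dots> \<le> n * n" by (rule mult_le_mono1) (use ij in simp)
    finally show "(case a of (i, j) \<Rightarrow> i * n + j) \<in> {..<n * n}" using ij by simp
    show "((case a of (i, j) \<Rightarrow> i * n + j) div n, (case a of (i, j) \<Rightarrow> i * n + j) mod n) = a"
      using ij by simp
  qed auto
  then show ?thesis by (simp add: sum.cartesian_product)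
qed

definition tensor_square_cols :: "nat \<Rightarrow> complex mat \<Rightarrow> complex mat" where
  "tensor_square_cols n W = mat (n*n) n (\<lambda>(r, p). W $$ (r div n, p) * W $$ (r mod n, p))"

lemma tensor_square_cols_carrier: "tensor_square_cols n W \<in> carrier_mat (n*n) n"
  by (simp add: tensor_square_cols_def)

lemma col_proj_sum_eq_mult_adjoint:
  assumes "W \<in> carrier_mat n n"
  shows "col_proj_sum n W = tensor_square_cols n W * mat_adjoint (tensor_square_cols n W)"
    (is "_ = ?V * mat_adjoint ?V")
proof (rule eq_matI)
  fix r c assume "r < dim_row (?V * mat_adjoint ?V)" "c < dim_col (?V * mat_adjoint ?V)"
  then have r: "r < n * n" and c: "c < n * n" by (simp_all add: tensor_square_cols_def mat_adjoint_dims)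
  have "(?V * mat_adjoint ?V) $$ (r, c) = (\<Sum>p<n. ?V $$ (r, p) * cnj (?V $$ (c, p)))"
    using index_mult_mat_adjoint[of ?V ?V r c] r c by (simp add: tensor_square_cols_def)
  also have "\<dots> = col_proj_sum n W $$ (r, c)"
    unfolding index_col_proj_sum[OF assms r c] using r c by (intro sum.cong) (simp_all add: tensor_square_cols_def)
  finally show "col_proj_sum n W $$ (r, c) = (?V * mat_adjoint ?V) $$ (r, c)" by simp
qed (simp_all add: col_proj_sum_def tensor_square_cols_def mat_adjoint_dims)

lemma tensor_square_cols_isometry:
  assumes W: "W \<in> carrier_mat n n" "mat_adjoint W * W = 1\<^sub>m n"
  shows "mat_adjoint (tensor_square_cols n W) * tensor_square_cols n W = 1\<^sub>m n"
    (is "mat_adjoint ?V * ?V = _")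
proof (rule eq_matI)
  fix p q assume "p < dim_row (1\<^sub>m n)" "q < dim_col (1\<^sub>m n)"
  then have p: "p < n" and q: "q < n" by simp_all
  have "(mat_adjoint ?V * ?V) $$ (p, q) = (\<Sum>t<n*n. cnj (?V $$ (t, p)) * ?V $$ (t, q))"
    using index_mat_adjoint_mult[of ?V ?V p q] p q by (simp add: tensor_square_cols_def)
  also have "\<dots> = (\<Sum>t<n*n. (\<lambda>i j. cnj (W $$ (i, p)) * W $$ (i, q) * (cnj (W $$ (j, p)) * W $$ (j, q))) (t div n) (t mod n))"
    using p q by (intro sum.cong refl) (simp add: tensor_square_cols_def mult_ac)
  also have "\<dots> = (\<Sum>i<n. \<Sum>j<n. cnj (W $$ (i, p)) * W $$ (i, q) * (cnj (W $$ (j, p)) * W $$ (j, q)))"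
    by (rule sum_div_mod)
  also have "\<dots> = (\<Sum>i<n. cnj (W $$ (i, p)) * W $$ (i, q)) * (\<Sum>j<n. cnj (W $$ (j, p)) * W $$ (j, q))"
    by (simp only: sum_product)
  also have "\<dots> = 1\<^sub>m n $$ (p, q)"
    using p q by (simp add: unitary_cols_orthonormal[OF W p q] of_bool_def)
  finally show "(mat_adjoint ?V * ?V) $$ (p, q) = 1\<^sub>m n $$ (p, q)" .
qed (simp_all add: tensor_square_cols_def mat_adjoint_dims)

lemma mult_mat_adjoint_idem:
  assumes V: "V \<in> carrier_mat m k" and iso: "mat_adjoint V * V = 1\<^sub>m k"
  shows "(V * mat_adjoint V) * (V * mat_adjoint V) = V * mat_adjoint V"
proof -
  have A: "mat_adjoint V \<in> carrier_mat k m" using V by (rule mat_adjoint_carrier)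
  have "(V * mat_adjoint V) * (V * mat_adjoint V) = V * (mat_adjoint V * (V * mat_adjoint V))"
    by (rule assoc_mult_mat[OF V A mult_carrier_mat[OF V A]])
  also have "mat_adjoint V * (V * mat_adjoint V) = (mat_adjoint V * V) * mat_adjoint V"
    by (rule assoc_mult_mat[OF A V A, symmetric])
  finally show ?thesis using A by (simp add: iso)
qed

lemma mat_adjoint_mult_mat_adjoint:
  fixes V :: "complex mat"
  shows "mat_adjoint (V * mat_adjoint V) = V * mat_adjoint V"
proof (rule eq_matI)
  fix r c assume "r < dim_row (V * mat_adjoint V)" "c < dim_col (V * mat_adjoint V)"
  then have r: "r < dim_row V" and c: "c < dim_row V" by (simp_all add: mat_adjoint_dims)
  have "mat_adjoint (V * mat_adjoint V) $$ (r, c) = cnj ((V * mat_adjoint V) $$ (c, r))"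
    using r c by (simp add: index_mat_adjoint mat_adjoint_dims)
  also have "\<dots> = (V * mat_adjoint V) $$ (r, c)"
    using r c by (simp add: index_mult_mat_adjoint mult.commute)
  finally show "mat_adjoint (V * mat_adjoint V) $$ (r, c) = (V * mat_adjoint V) $$ (r, c)" .
qed (simp_all add: mat_adjoint_dims)

lemma (in vec_space) cols_mult_subset_span:
  assumes B: "B \<in> carrier_mat n m" and C: "C \<in> carrier_mat m k"
  shows "set (cols (B * C)) \<subseteq> span (set (cols B))"
proof
  fix x assume "x \<in> set (cols (B * C))"
  then obtain j where j: "j < k" "x = col (B * C) j" using C by (auto simp: in_set_conv_nth)
  have v: "col C j \<in> carrier_vec m" using j(1) C by simp
  have "x = B *\<^sub>v col C j" unfolding j(2) by (rule col_mult2[OF B C j(1)])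
  also have "\<dots> = mat_of_cols n (cols B) *\<^sub>v col C j" using mat_of_cols_cols[of B] B by simp
  also have "\<dots> = lincomb (\<lambda>w. \<Sum>i = 0..<length (cols B). if w = cols B ! i then col C j $ i else 0) (set (cols B))"
    by (rule mat_of_cols_mult_as_finsum) (use B v in auto)
  finally show "x \<in> span (set (cols B))" using B by (intro in_spanI) (auto simp: cols_def)
qed

lemma rank_isometry:
  fixes V :: "complex mat"
  assumes V: "V \<in> carrier_mat m k" and iso: "mat_adjoint V * V = 1\<^sub>m k"
  shows "vec_space.rank m V = k"
proof -
  interpret vec_space "TYPE(complex)" m .
  have A: "mat_adjoint V \<in> carrier_mat k m" using V by (rule mat_adjoint_carrier)
  have dist: "distinct (cols V)"
  proof (rule ccontr)
    assume "\<not> distinct (cols V)"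
    then obtain p q where pq: "p < k" "q < k" "p \<noteq> q" "col V p = col V q"
      using V by (auto simp: distinct_conv_nth)
    have "unit_vec k p = col (mat_adjoint V * V) p" using iso pq by simp
    also have "\<dots> = col (mat_adjoint V * V) q" using pq V A by simp
    also have "\<dots> = unit_vec k q" using iso pq by simp
    finally show False using pq by simp
  qed
  have "lin_indpt (set (cols V))"
  proof
    assume "lin_dep (set (cols V))"
    then obtain v where v: "v \<in> carrier_vec k" "v \<noteq> 0\<^sub>v k" "V *\<^sub>v v = 0\<^sub>v m"
      using lin_depE[OF V _ dist] by blast
    have "v = (mat_adjoint V * V) *\<^sub>v v" using iso v by simp
    also have "\<dots> = mat_adjoint V *\<^sub>v (V *\<^sub>v v)" using A V v by simp
    also have "\<dots> = 0\<^sub>v k" using v A by (auto intro!: eq_vecI simp: scalar_prod_def)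
    finally show False using v by simp
  qed
  then show ?thesis by (rule lin_indpt_full_rank[OF V dist])
qed

lemma rank_mult_mat_adjoint_isometry:
  fixes V :: "complex mat"
  assumes V: "V \<in> carrier_mat m k" and iso: "mat_adjoint V * V = 1\<^sub>m k"
  shows "vec_space.rank m (V * mat_adjoint V) = k"
proof -
  interpret vec_space "TYPE(complex)" m .
  have A: "mat_adjoint V \<in> carrier_mat k m" using V by (rule mat_adjoint_carrier)
  have P: "V * mat_adjoint V \<in> carrier_mat m m" using V A by simp
  have "V * mat_adjoint V * V = V"
    using V A iso by (simp add: assoc_mult_mat[of V m k "mat_adjoint V" m])
  then have "set (cols V) \<subseteq> span (set (cols (V * mat_adjoint V)))"
    using cols_mult_subset_span[OF P V] by simp
  moreover have "set (cols (V * mat_adjoint V)) \<subseteq> span (set (cols V))"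
    by (rule cols_mult_subset_span[OF V A])
  ultimately have "span (set (cols (V * mat_adjoint V))) = span (set (cols V))"
    using span_subsetI[of "set (cols V)"] span_subsetI[of "set (cols (V * mat_adjoint V))"] P V
    by (metis cols_dim carrier_matD(1) subset_antisym)
  then show ?thesis using rank_isometry[OF V iso] by (simp add: rank_def)
qed

lemma col_proj_sum_orthogonal_projector:
  assumes "W \<in> carrier_mat n n" "mat_adjoint W * W = 1\<^sub>m n"
  shows "col_proj_sum n W * col_proj_sum n W = col_proj_sum n W"
    and "mat_adjoint (col_proj_sum n W) = col_proj_sum n W"
    and "vec_space.rank (n*n) (col_proj_sum n W) = n"
  unfolding col_proj_sum_eq_mult_adjoint[OF assms(1)]
  using mult_mat_adjoint_idem rank_mult_mat_adjoint_isometry mat_adjoint_mult_mat_adjoint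
    tensor_square_cols_carrier tensor_square_cols_isometry[OF assms] by blast+

lemma smult_inverse_diff_cancel:
  fixes c :: "'a :: field"
  assumes "c \<noteq> 0" "Y \<in> carrier_mat m k" "P \<in> carrier_mat m k"
  shows "(1 / c) \<cdot>\<^sub>m (Y - (Y - c \<cdot>\<^sub>m P)) = P"
  by (rule eq_matI) (use assms in auto)

theorem mainTheorem3:
  fixes n b :: nat and W :: "complex mat" and U :: "fstate \<Rightarrow> fstate"
  assumes W_carrier: "W \<in> carrier_mat n n"
    and W_unitary: "W * mat_adjoint W = 1\<^sub>m n" "mat_adjoint W * W = 1\<^sub>m n"
    and U_W: "passive_gaussian_unitary n W U"
  defines "\<sigma> \<equiv> moment2 n (U (uniform_fock n b))"
  shows "\<sigma> = of_nat ((b+1)^2) \<cdot>\<^sub>m (1\<^sub>m (n*n) + swap_mat n) - of_nat (b*(b+1)) \<cdot>\<^sub>m col_proj_sum n W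
         \<and> (b \<ge> 1 \<longrightarrow>
              (let A = (1 / of_nat (b*(b+1))) \<cdot>\<^sub>m (of_nat ((b+1)^2) \<cdot>\<^sub>m (1\<^sub>m (n*n) + swap_mat n) - \<sigma>)
               in A = col_proj_sum n W \<and> A * A = A \<and> mat_adjoint A = A
                  \<and> vec_space.rank (n*n) A = n))"
proof -
  let ?Y = "of_nat ((b+1)^2) \<cdot>\<^sub>m (1\<^sub>m (n*n) + swap_mat n) :: complex mat"
  let ?P = "col_proj_sum n W"
  have moments: "\<sigma> = ?Y - of_nat (b*(b+1)) \<cdot>\<^sub>m ?P"
    unfolding \<sigma>_def by (rule moment2_passive_unitary_uniform[OF W_carrier W_unitary(1) U_W])
  have "(1 / of_nat (b*(b+1))) \<cdot>\<^sub>m (?Y - \<sigma>) = ?P" if "b \<ge> 1"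
  proof -
    have "(of_nat (b*(b+1)) :: complex) \<noteq> 0" unfolding of_nat_eq_0_iff using that by simp
    then show ?thesis unfolding moments
      using swap_mat_carrier[of n] col_proj_sum_carrier[of n W] by (intro smult_inverse_diff_cancel) auto
  qed
  then show ?thesis
    using moments col_proj_sum_orthogonal_projector[OF W_carrier W_unitary(2)] by (simp add: Let_def)
qed

end
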